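(* Under the hypotheses and notation of the recursion above (birational $\Phi_n$ of $\mathbf{CP}^2$ of degree $n$ with only ordinary fundamental points, equivalent pairs $(\alpha_j,\beta_j,m_j)$, $j=1,\dots,\sigma_1$), let $$\Lambda(\lambda)=\begin{pmatrix}\lambda-n & i^{(-1)}_{\beta_1} & \cdots & i^{(-1)}_{\beta_{\sigma_1}}\\ -i_{\alpha_1} & \lambda^{m_1+1}+i_{\alpha_1\beta_1} & \cdots & i_{\alpha_1\beta_{\sigma_1}}\\ \vdots & \vdots & \ddots & \vdots\\ -i_{\alpha_{\sigma_1}} & i_{\alpha_{\sigma_1}\beta_1} & \cdots & \lambda^{m_{\sigma_1}+1}+i_{\alpha_{\sigma_1}\beta_{\sigma_1}}\end{pmatrix},$$ i.e. the $(1,1)$ entry is $\lambda-n$, the $(1,l+1)$ entry is $i^{(-1)}_{\beta_l}$, the $(j+1,1)$ entry is $-i_{\alpha_j}$, and the $(j+1,l+1)$ entry is $i_{\alpha_j\beta_l}+\delta_{jl}\lambda^{m_j+1}$. Then $\det\Lambda(\lambda)=\lambda^m+\sum_{i=0}^{m-1}a_i\lambda^i$ is a monic polynomial with integer coefficients of degree $m=m_1+\dots+m_{\sigma_1}+\sigma_1+1$, and the degrees $d(k)=\deg\Phi_n^k$ satisfy the autonomous linear difference equation $$d(k+m)+\sum_{i=0}^{m-1}a_i\,d(k+i)=0\qquad(k\ge 0 \text{ sufficiently large for all terms to be defined by the recursion}).$$ Consequently $d(k)=\sum_{i=1}^{l}\lambda_i^k\sum_{j=0}^{s_i-1}c_{ij}k^j$,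 where $\lambda_1,\dots,\lambda_l$ are the distinct roots of $\det\Lambda(\lambda)=0$ with multiplicities $s_1,\dots,s_l$ and the constants $c_{ij}$ are determined by the initial values $d(1),\dots,d(m)$; in particular, if all roots satisfy $|\lambda_i|=1$ then $d(k)$ grows at most polynomially in $k$.
   Context: A birational map $\Phi_n$ of $\mathbf{CP}^2$ is written $z\mapsto z'$, $z'_1:z'_2:z'_3=\phi_1(z):\phi_2(z):\phi_3(z)$, with $\phi_i$ coprime homogeneous polynomials of degree $n$, inverse of the same form; $d(k)=\deg\Phi_n^k$. Fundamental points $O_\alpha$ (multiplicities $i_\alpha$) of $\Phi_n$ and $O^{(-1)}_\beta$ (multiplicities $i^{(-1)}_\beta$) of $\Phi_n^{-1}$, $\alpha,\beta=1,\dots,\sigma$, all assumed ordinary; $i_{\alpha\beta}$ is the multiplicity at $O_\alpha$ of the principal curve $J_\beta$ contracted by $\Phi_n$ to $O^{(-1)}_\beta$. The equivalent pairs are the $\sigma_1$ pairs $(O_{\alpha_j},O^{(-1)}_{\beta_j})$ with $\Phi_n^{-m_j}(O_{\alpha_j})=O^{(-1)}_{\beta_j}$, $m_j\ge 0$, all other fundamental points having backward orbits under $\Phi_n^{-1}$ that never meet $\{O^{(-1)}_\beta\}$. The multiplicities $\gamma_\alpha(k)$ of a general member of the linear system of $\Phi_n^k$ at $O_\alpha$ and $d(k)$ satisfy $d(0)=1$, $d(1)=n$, $\gamma_\alpha(1)=i_\alpha$, $\gamma_\alpha(k)=0$ for $k\le0$, $d(k)=n\,d(k-1)-\sum_{l=1}^{\sigma_1}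 i^{(-1)}_{\beta_l}\gamma_{\alpha_l}(k-m_l-1)$ and $\gamma_{\alpha_j}(k)=i_{\alpha_j}d(k-1)-\sum_{l=1}^{\sigma_1} i_{\alpha_j\beta_l}\gamma_{\alpha_l}(k-m_l-1)$. *)

theory Defs
  imports "Jordan_Normal_Form.Determinant" "HOL-Computational_Algebra.Polynomial" Complex_Main

begin

text \<open>Row/column 0 correspond to the first row/column of the paper; row j+1 / column l+1
  correspond to the equivalent pairs j, l (indices j, l < sigma1).
  Parameters: n degree, alpha j / beta j the fundamental points of the j-th equivalent pair,
  m j the shifts, i the multiplicities i_alpha, iinv the multiplicities i^(-1)_beta,
  iab alpha beta the multiplicity i_{alpha beta}.\<close>
definition Lambda ::
  "nat \<Rightarrow> nat \<Rightarrow> (nat \<Rightarrow> nat) \<Rightarrow> (nat \<Rightarrow> nat) \<Rightarrow> (nat \<Rightarrow> nat)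
   \<Rightarrow> (nat \<Rightarrow> nat) \<Rightarrow> (nat \<Rightarrow> nat) \<Rightarrow> (nat \<Rightarrow> nat \<Rightarrow> nat) \<Rightarrow> int poly mat" where
  "Lambda n \<sigma>1 \<alpha> \<beta> m i iinv iab =
     mat (Suc \<sigma>1) (Suc \<sigma>1) (\<lambda>(r, c).
       if r = 0 \<and> c = 0 then [:- of_nat n, 1:]
       else if r = 0 then [:of_nat (iinv (\<beta> (c - 1))):]
       else if c = 0 then [:- of_nat (i (\<alpha> (r - 1))):]
       else [:of_nat (iab (\<alpha> (r - 1)) (\<beta> (c - 1))):]
            + (if r = c then monom 1 (m (r - 1) + 1) else 0))"

end

theory Submission
  imports Defs "HOL-Computational_Algebra.Fundamental_Theorem_Algebra"
begin

(* Let E be the shift operator on sequences, (E f) k = f (k + 1).  In terms of the delayed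
   sequences g_j k = gamma (alpha j) (k - m j), the two recursions say that the polynomial
   matrix Lambda(E) annihilates the vector of sequences (d, g_0, ..., g_(sigma1 - 1)).
   Multiplying by the adjugate of Lambda shows that det Lambda(E) annihilates d, which is the
   linear recurrence.  All off-diagonal entries of Lambda are constants, so in the Leibniz
   expansion only the product of the diagonal entries reaches the top degree; hence det Lambda
   is monic of degree 1 + sum_j (m_j + 1).  The closed form is the classical solution of a
   linear recurrence with constant coefficients: split off one root z of det Lambda at a time
   and solve the first-order equation f (k + 1) - z f k = sum_w w^k p_w(k) inside the
   exponential polynomials. *)

section \<open>Polynomials in the shift operator\<close>

definition eval_shift :: "'a::comm_semiring_1 poly \<Rightarrow> (nat \<Rightarrow> 'a) \<Rightarrow> nat \<Rightarrow> 'a" where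
  "eval_shift p f k = (\<Sum>j\<le>degree p. coeff p j * f (k + j))"

lemma eval_shift_eq_sum_atMost:
  "degree p \<le> N \<Longrightarrow> eval_shift p f k = (\<Sum>j\<le>N. coeff p j * f (k + j))"
  unfolding eval_shift_def by (rule sum.mono_neutral_left) (auto simp: coeff_eq_0)

lemma eval_shift_0 [simp]: "eval_shift 0 f k = 0"
  by (simp add: eval_shift_def)

lemma eval_shift_zero_seq [simp]: "eval_shift p (\<lambda>_. 0) k = 0"
  by (simp add: eval_shift_def)

lemma eval_shift_const [simp]: "eval_shift [:c:] f k = c * f k"
  by (simp add: eval_shift_def)

lemma eval_shift_pCons: "eval_shift (pCons a p) f k = a * f k + eval_shift p f (Suc k)"
proof -
  have "eval_shift (pCons a p) f k = (\<Sum>j\<le>Suc (degree p). coeff (pCons a p) j * f (k + j))"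
    by (rule eval_shift_eq_sum_atMost) (rule degree_pCons_le)
  also have "\<dots> = a * f k + (\<Sum>j\<le>degree p. coeff p j * f (Suc k + j))"
    by (subst sum.atMost_Suc_shift) simp
  finally show ?thesis by (simp add: eval_shift_def)
qed

lemma eval_shift_add: "eval_shift (p + q) f k = eval_shift p f k + eval_shift q f k"
proof -
  let ?N = "max (degree p) (degree q)"
  have "degree (p + q) \<le> ?N" by (rule degree_add_le) auto
  then show ?thesis
    by (simp add: eval_shift_eq_sum_atMost[of _ ?N] sum.distrib algebra_simps)
qed

lemma eval_shift_smult: "eval_shift (smult c p) f k = c * eval_shift p f k"
  by (subst eval_shift_eq_sum_atMost[OF degree_smult_le])
    (simp add: eval_shift_def sum_distrib_left mult.assoc)

lemma eval_shift_mult: "eval_shift (p * q) f k = eval_shift p (eval_shift q f) k"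
proof (induction p arbitrary: k)
  case (pCons a p)
  have "pCons a p * q = smult a q + pCons 0 (p * q)" by simp
  then show ?case by (simp add: eval_shift_add eval_shift_smult eval_shift_pCons pCons.IH)
qed simp

lemma eval_shift_sum: "eval_shift (\<Sum>c\<in>A. p c) f k = (\<Sum>c\<in>A. eval_shift (p c) f k)"
  by (induction A rule: infinite_finite_induct) (simp_all add: eval_shift_add)

lemma eval_shift_sum_seq:
  "eval_shift p (\<lambda>k. \<Sum>c\<in>A. f c k) k = (\<Sum>c\<in>A. eval_shift p (f c) k)"
  unfolding eval_shift_def by (simp add: sum_distrib_left sum.swap[of _ A])

lemma eval_shift_monom_1: "eval_shift (monom 1 j) f k = f (k + j)"
  by (simp add: eval_shift_def coeff_monom degree_monom_eq if_distrib[of "\<lambda>x. x * _"] cong: if_cong)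

lemma eval_shift_shifted_seq: "eval_shift p (\<lambda>k. f (k + r)) k = eval_shift p f (k + r)"
  by (simp add: eval_shift_def add_ac)

lemma eval_shift_monic:
  assumes "lead_coeff p = 1"
  shows "eval_shift p f k = f (k + degree p) + (\<Sum>j<degree p. coeff p j * f (k + j))"
  using assms by (simp add: eval_shift_def lessThan_Suc_atMost[symmetric] add.commute)

lemma eval_shift_of_int_poly:
  "eval_shift (map_poly of_int p) (\<lambda>k. of_int (f k)) k =
     (of_int (eval_shift p f k) :: 'a::comm_ring_1)"
  by (subst eval_shift_eq_sum_atMost[OF map_poly_degree_leq])
    (simp add: eval_shift_def coeff_map_poly)

section \<open>Polynomial matrices acting on sequences\<close>

definition mat_eval_shift :: "'a::comm_semiring_1 poly mat \<Rightarrow> (nat \<Rightarrow> nat \<Rightarrow> 'a) \<Rightarrow> nat \<Rightarrow> nat \<Rightarrow> 'a"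
  where "mat_eval_shift A U r k = (\<Sum>c<dim_col A. eval_shift (A $$ (r, c)) (U c) k)"

lemma mat_eval_shift_mult:
  assumes "A \<in> carrier_mat nr n" and "B \<in> carrier_mat n nc" and "r < nr"
  shows "mat_eval_shift (A * B) U r k = mat_eval_shift A (mat_eval_shift B U) r k"
proof -
  have "mat_eval_shift (A * B) U r k =
      (\<Sum>c<nc. eval_shift (\<Sum>t<n. A $$ (r, t) * B $$ (t, c)) (U c) k)"
    unfolding mat_eval_shift_def using assms
    by (intro sum.cong) (auto simp: scalar_prod_def atLeast0LessThan)
  also have "\<dots> = (\<Sum>t<n. \<Sum>c<nc. eval_shift (A $$ (r, t)) (eval_shift (B $$ (t, c)) (U c)) k)"
    by (simp add: eval_shift_sum eval_shift_mult sum.swap[of _ "{..<nc}"])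
  also have "\<dots> = mat_eval_shift A (mat_eval_shift B U) r k"
    unfolding mat_eval_shift_def using assms by (simp add: eval_shift_sum_seq)
  finally show ?thesis .
qed

lemma eval_shift_det_eq_0:
  assumes A: "A \<in> carrier_mat n n" and r: "r < n"
    and annihilated: "\<And>t k. t < n \<Longrightarrow> mat_eval_shift A U t k = 0"
  shows "eval_shift (det A) (U r) k = 0"
proof -
  have "eval_shift (det A) (U r) k = mat_eval_shift (det A \<cdot>\<^sub>m 1\<^sub>m n) U r k"
    unfolding mat_eval_shift_def using r
    by (simp add: if_distrib[of "(*) (det A)"] if_distrib[of "\<lambda>p. eval_shift p _ _"] cong: if_cong)
  also have "\<dots> = mat_eval_shift (adj_mat A * A) U r k"
    by (simp add: adj_mat(3)[OF A])
  also have "\<dots> = mat_eval_shift (adj_mat A) (mat_eval_shift A U) r k"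
    by (rule mat_eval_shift_mult[OF adj_mat(1)[OF A] A r])
  also have "\<dots> = 0"
  proof -
    have "mat_eval_shift A U t = (\<lambda>_. 0)" if "t < n" for t
      using annihilated[OF that] by auto
    then show ?thesis
      using adj_mat(1)[OF A] by (simp add: mat_eval_shift_def[of "adj_mat A"])
  qed
  finally show ?thesis .
qed

lemma degree_prod_permuted_entries_less:
  fixes A :: "'a::comm_semiring_1 poly mat"
  assumes off_diag: "\<And>r c. r < n \<Longrightarrow> c < n \<Longrightarrow> r \<noteq> c \<Longrightarrow> degree (A $$ (r, c)) = 0"
    and diag: "\<And>c. c < n \<Longrightarrow> 0 < degree (A $$ (c, c))"
    and p: "p permutes {..<n}" "p \<noteq> id"
  shows "degree (\<Prod>i<n. A $$ (i, p i)) < (\<Sum>c<n. degree (A $$ (c, c)))"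
proof -
  have "degree (\<Prod>i<n. A $$ (i, p i)) \<le> (\<Sum>i<n. degree (A $$ (i, p i)))"
    using degree_prod_sum_le[of "{..<n}" "\<lambda>i. A $$ (i, p i)"] by simp
  also have "\<dots> < (\<Sum>i<n. degree (A $$ (p i, p i)))"
  proof (rule sum_strict_mono_ex1)
    show "\<forall>i\<in>{..<n}. degree (A $$ (i, p i)) \<le> degree (A $$ (p i, p i))"
      using off_diag permutes_in_image[OF p(1)] by (metis eq_refl le0 lessThan_iff)
    obtain i where "p i \<noteq> i" using p(2) by (metis eq_id_iff)
    moreover have "i < n" using calculation permutes_not_in[OF p(1)] by blast
    ultimately show "\<exists>i\<in>{..<n}. degree (A $$ (i, p i)) < degree (A $$ (p i, p i))"
      using off_diag diag permutes_in_image[OF p(1)] by (metis lessThan_iff)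
  qed simp
  also have "\<dots> = (\<Sum>c<n. degree (A $$ (c, c)))"
    using sum.permute[OF p(1), of "\<lambda>c. degree (A $$ (c, c))"] by (simp add: comp_def)
  finally show ?thesis .
qed

lemma det_const_off_diagonal:
  fixes A :: "'a::idom poly mat"
  assumes A: "A \<in> carrier_mat n n"
    and off_diag: "\<And>r c. r < n \<Longrightarrow> c < n \<Longrightarrow> r \<noteq> c \<Longrightarrow> degree (A $$ (r, c)) = 0"
    and diag: "\<And>c. c < n \<Longrightarrow> 0 < degree (A $$ (c, c))"
  shows "degree (det A) = (\<Sum>c<n. degree (A $$ (c, c)))"
    and "lead_coeff (det A) = (\<Prod>c<n. lead_coeff (A $$ (c, c)))"
proof -
  define D where "D = (\<Sum>c<n. degree (A $$ (c, c)))"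
  define P where "P = {p. p permutes {..<n}} - {id}"
  define rest where "rest = (\<Sum>p\<in>P. signof p * (\<Prod>i<n. A $$ (i, p i)))"
  have finite_perms: "finite {p. p permutes {..<n}}" by (rule finite_permutations) simp
  then have det: "det A = rest + (\<Prod>c<n. A $$ (c, c))"
    unfolding det_def'[OF A] rest_def P_def atLeast0LessThan
    by (subst sum.remove[of _ id]) (simp_all add: permutes_id add.commute)
  have diag_nonzero: "A $$ (c, c) \<noteq> 0" if "c < n" for c
    using diag[OF that] by auto
  have degree_diag: "degree (\<Prod>c<n. A $$ (c, c)) = D"
    unfolding D_def using diag_nonzero by (simp add: degree_prod_eq_sum_degree)
  have rest_small: "rest = 0 \<or> degree rest < degree (\<Prod>c<n. A $$ (c, c))"
  proof (cases "P = {}")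
    case False
    have term_small: "degree (signof p * (\<Prod>i<n. A $$ (i, p i)) :: 'a poly) < D" if "p \<in> P" for p
      using degree_mult_le[of "signof p" "\<Prod>i<n. A $$ (i, p i)"]
        degree_prod_permuted_entries_less[OF off_diag diag, where p=p] that
      unfolding D_def P_def by (simp add: sign_def)
    have "degree rest \<le> D - 1"
      unfolding rest_def
    proof (rule degree_sum_le)
      show "finite P" using finite_perms by (simp add: P_def)
    qed (use term_small in fastforce)
    moreover have "0 < D" using False term_small by fastforce
    ultimately show ?thesis using degree_diag by linarith
  qed (simp add: rest_def)
  then show "degree (det A) = (\<Sum>c<n. degree (A $$ (c, c)))"
    using degree_diag by (auto simp: det D_def degree_add_eq_right)
  from rest_small show "lead_coeff (det A) = (\<Prod>c<n. lead_coeff (A $$ (c, c)))"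
    by (auto simp: det degree_add_eq_right coeff_eq_0 lead_coeff_prod)
qed

section \<open>Closed form of linear recurrences\<close>

definition twisted_difference :: "'a::comm_ring_1 \<Rightarrow> 'a \<Rightarrow> 'a poly \<Rightarrow> 'a poly" where
  "twisted_difference w z q = smult w (q \<circ>\<^sub>p [:1, 1:]) - smult z q"

lemma poly_twisted_difference:
  "poly (twisted_difference w z q) x = w * poly q (x + 1) - z * poly q x"
  by (simp add: twisted_difference_def poly_pcompose add.commute)

lemma twisted_difference_add:
  "twisted_difference w z (p + q) = twisted_difference w z p + twisted_difference w z q"
  by (simp add: twisted_difference_def pcompose_add smult_add_right)

lemma shift_sub_exp_times_poly:
  "w ^ Suc k * poly q (of_nat (Suc k)) - z * (w ^ k * poly q (of_nat k)) =
     w ^ k * poly (twisted_difference w z q) (of_nat k)"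
  by (simp add: poly_twisted_difference algebra_simps)

lemma coeff_twisted_difference_monom:
  "coeff (twisted_difference w z (monom b N)) j =
     b * (w * of_nat (N choose j) - z * (if j = N then 1 else 0))"
proof -
  have "[:0, 1:] ^ N \<circ>\<^sub>p [:1, 1:] = ([:1, 1:] ^ N :: 'a poly)"
    by (induction N) (simp_all add: pcompose_1 pcompose_mult pcompose_pCons)
  then have "monom b N \<circ>\<^sub>p [:1, 1:] = smult b ([:1, 1:] ^ N)"
    by (simp add: monom_altdef pcompose_smult)
  moreover have "coeff ([:1, 1:] ^ N) j = (of_nat (N choose j) :: 'a)"
    by (cases "j \<le> N")
      (simp_all add: coeff_linear_poly_power coeff_eq_0 degree_linear_power binomial_eq_0)
  ultimately show ?thesis
    by (simp add: twisted_difference_def coeff_monom algebra_simps)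
qed

lemma twisted_difference_surj:
  fixes w z :: "'a::field_char_0"
  assumes "w \<noteq> z \<or> z \<noteq> 0"
  shows "\<exists>q. twisted_difference w z q = p \<and> degree q \<le> degree p + (if w = z then 1 else 0)"
proof (induction "degree p" arbitrary: p rule: less_induct)
  case less
  define N where "N = degree p + (if w = z then 1 else 0)"
  \<comment> \<open>the coefficient of x ^ degree p in twisted_difference w z (monom 1 N)\<close>
  define c where "c = (if w = z then z * of_nat N else w - z)"
  have "c \<noteq> 0"
    using assms by (auto simp: c_def N_def simp del: of_nat_Suc)
  define q1 where "q1 = monom (lead_coeff p / c) N"
  have top_coeffs: "coeff (twisted_difference w z q1) j = coeff p j" if "degree p \<le> j" for j
  proof -
    have "coeff (twisted_difference w z q1) j =
        lead_coeff p / c * (w * of_nat (N choose j) - z * (if j = N then 1 else 0))"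
      unfolding q1_def by (rule coeff_twisted_difference_monom)
    also have "\<dots> = coeff p j"
      using that \<open>c \<noteq> 0\<close> by (cases "j = degree p") (auto simp: c_def N_def coeff_eq_0 binomial_eq_0)
    finally show ?thesis .
  qed
  define r where "r = p - twisted_difference w z q1"
  have "r = 0 \<or> degree r < degree p"
    using top_coeffs[of "degree r"] leading_coeff_0_iff[of r] unfolding r_def by fastforce
  then obtain q2 where q2: "twisted_difference w z q2 = r" "degree q2 \<le> N"
  proof
    assume "r = 0"
    then show ?thesis using that[of 0] by (simp add: twisted_difference_def)
  next
    assume "degree r < degree p"
    then show ?thesis using less that unfolding N_def by fastforce
  qed
  have "twisted_difference w z (q1 + q2) = p"
    by (simp add: twisted_difference_add q2(1) r_def)
  moreover have "degree (q1 + q2) \<le> N"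
    using q2(2) degree_monom_le[of _ N] by (auto simp: q1_def intro: degree_add_le)
  ultimately show ?case unfolding N_def by blast
qed

lemma first_order_recurrence_exp_poly:
  fixes z :: "'a::field_char_0"
  assumes "z \<noteq> 0" and "finite R"
    and rec: "\<And>k. f (Suc k) - z * f k = (\<Sum>w\<in>R. w ^ k * poly (p w) (of_nat k))"
  obtains q where "\<And>w. w \<in> R \<Longrightarrow> degree (q w) \<le> degree (p w) + (if w = z then 1 else 0)"
    and "z \<notin> R \<Longrightarrow> degree (q z) = 0"
    and "\<And>k. f k = (\<Sum>w\<in>insert z R. w ^ k * poly (q w) (of_nat k))"
proof -
  have "\<forall>w. \<exists>q. twisted_difference w z q = p w \<and>
      degree q \<le> degree (p w) + (if w = z then 1 else 0)"
    using twisted_difference_surj \<open>z \<noteq> 0\<close> by blast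
  then obtain q0 where q0: "\<And>w. twisted_difference w z (q0 w) = p w"
    and degree_q0: "\<And>w. degree (q0 w) \<le> degree (p w) + (if w = z then 1 else 0)"
    by metis
  define g where "g k = (\<Sum>w\<in>R. w ^ k * poly (q0 w) (of_nat k))" for k
  have "g (Suc k) - z * g k = (\<Sum>w\<in>R. w ^ k * poly (p w) (of_nat k))" for k
    unfolding g_def sum_distrib_left sum_subtractf[symmetric]
    by (simp only: shift_sub_exp_times_poly q0)
  then have step: "f (Suc k) - g (Suc k) = z * (f k - g k)" for k
    using rec[of k] by (simp add: algebra_simps)
  have f_eq: "f k - g k = z ^ k * (f 0 - g 0)" for k
    by (induction k) (simp_all add: step)
  define q where "q w = (if w \<in> R then q0 w else 0) + (if w = z then [:f 0 - g 0:] else 0)" for w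
  show ?thesis
  proof
    show "degree (q w) \<le> degree (p w) + (if w = z then 1 else 0)" if "w \<in> R" for w
      using that degree_q0[of w] by (auto simp: q_def intro: degree_add_le)
    show "degree (q z) = 0" if "z \<notin> R"
      using that by (simp add: q_def)
    show "f k = (\<Sum>w\<in>insert z R. w ^ k * poly (q w) (of_nat k))" for k
    proof -
      have "(\<Sum>w\<in>insert z R. w ^ k * poly (q w) (of_nat k)) =
          (\<Sum>w\<in>insert z R. if w \<in> R then w ^ k * poly (q0 w) (of_nat k) else 0) +
          (\<Sum>w\<in>insert z R. if w = z then z ^ k * (f 0 - g 0) else 0)"
        unfolding sum.distrib[symmetric] by (rule sum.cong) (auto simp: q_def algebra_simps)
      also have "\<dots> = g k + z ^ k * (f 0 - g 0)"
        using \<open>finite R\<close>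
        by (simp add: sum.inter_restrict[symmetric] Int_absorb1 subset_insertI g_def)
      finally show ?thesis by (simp add: f_eq[symmetric])
    qed
  qed
qed

definition exp_poly_solution :: "complex poly \<Rightarrow> (nat \<Rightarrow> complex) \<Rightarrow> bool" where
  "exp_poly_solution Q f \<longleftrightarrow> (\<exists>p. (\<forall>w. poly Q w = 0 \<longrightarrow> degree (p w) < order w Q) \<and>
     (\<forall>k. f k = (\<Sum>w | poly Q w = 0. w ^ k * poly (p w) (of_nat k))))"

lemma order_linear_factor: "order w [:-z, 1:] = (if w = z then 1 else 0)"
  using order_power_n_n[of z 1] by (auto intro: order_0I)

lemma exp_poly_solution_linear_factor:
  assumes "z \<noteq> 0" and "Q' \<noteq> 0"
    and "exp_poly_solution Q' (\<lambda>k. f (Suc k) - z * f k)"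
  shows "exp_poly_solution ([:-z, 1:] * Q') f"
proof -
  define Q where "Q = [:-z, 1:] * Q'"
  obtain p' where degree_p': "\<And>w. poly Q' w = 0 \<Longrightarrow> degree (p' w) < order w Q'"
    and rec: "\<And>k. f (Suc k) - z * f k = (\<Sum>w | poly Q' w = 0. w ^ k * poly (p' w) (of_nat k))"
    using assms(3) unfolding exp_poly_solution_def by blast
  obtain p where
    degree_p: "\<And>w. poly Q' w = 0 \<Longrightarrow> degree (p w) \<le> degree (p' w) + (if w = z then 1 else 0)"
    and degree_p_new: "poly Q' z \<noteq> 0 \<Longrightarrow> degree (p z) = 0"
    and f_eq: "\<And>k. f k = (\<Sum>w\<in>insert z {w. poly Q' w = 0}. w ^ k * poly (p w) (of_nat k))"
    using first_order_recurrence_exp_poly[OF \<open>z \<noteq> 0\<close> poly_roots_finite[OF \<open>Q' \<noteq> 0\<close>] rec]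
    by auto
  have roots: "{w. poly Q w = 0} = insert z {w. poly Q' w = 0}"
    by (auto simp: Q_def)
  have "Q \<noteq> 0"
    unfolding Q_def using \<open>Q' \<noteq> 0\<close> by (intro no_zero_divisors) simp_all
  have order_Q: "order w Q = (if w = z then 1 else 0) + order w Q'" for w
    using order_mult[OF \<open>Q \<noteq> 0\<close>[unfolded Q_def], of w] by (simp only: Q_def order_linear_factor)
  have "degree (p w) < order w Q" if "poly Q w = 0" for w
  proof (cases "poly Q' w = 0")
    case True
    then show ?thesis using degree_p[OF True] degree_p'[OF True] order_Q[of w] by linarith
  next
    case False
    moreover have "w = z" using that False by (simp add: Q_def)
    ultimately show ?thesis using degree_p_new order_Q[of w] by simp
  qed
  then show ?thesis
    using f_eq unfolding exp_poly_solution_def Q_def[symmetric] roots by blast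
qed

lemma exp_poly_solution_if_nonzero_constant_coeff:
  fixes Q :: "complex poly"
  assumes "poly Q 0 \<noteq> 0" and "\<And>k. eval_shift Q f k = 0"
  shows "exp_poly_solution Q f"
  using assms
proof (induction "degree Q" arbitrary: Q f rule: less_induct)
  case less
  show ?case
  proof (cases "degree Q = 0")
    case True
    then obtain c where "Q = [:c:]" by (rule degree_eq_zeroE)
    with less.prems show ?thesis by (simp add: exp_poly_solution_def)
  next
    case False
    then obtain z where "poly Q z = 0"
      using fundamental_theorem_of_algebra[of Q] constant_degree[of Q] by auto
    then obtain Q' where Q: "Q = [:-z, 1:] * Q'"
      by (metis dvdE poly_eq_0_iff_dvd)
    with less.prems(1) have "z \<noteq> 0" and "poly Q' 0 \<noteq> 0" and "Q' \<noteq> 0"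
      by auto
    have "degree Q' < degree Q"
      unfolding Q using \<open>Q' \<noteq> 0\<close> by (subst degree_mult_eq) auto
    have "eval_shift Q' (\<lambda>k. f (Suc k) - z * f k) k = 0" for k
    proof -
      have "(\<lambda>k. f (Suc k) - z * f k) = eval_shift [:-z, 1:] f"
        by (simp add: fun_eq_iff eval_shift_pCons)
      then show ?thesis
        using less.prems(2)[of k] by (simp only: Q mult.commute[of "[:-z, 1:]"] eval_shift_mult)
    qed
    then have "exp_poly_solution Q' (\<lambda>k. f (Suc k) - z * f k)"
      by (rule less.hyps[OF \<open>degree Q' < degree Q\<close> \<open>poly Q' 0 \<noteq> 0\<close>])
    then show ?thesis
      unfolding Q using \<open>z \<noteq> 0\<close> \<open>Q' \<noteq> 0\<close> by (rule exp_poly_solution_linear_factor[rotated 2])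
  qed
qed

lemma exp_times_poly_recenter:
  fixes w :: "'a::field"
  assumes "w \<noteq> 0" and "r \<le> k"
  shows "w ^ (k - r) * poly q (of_nat (k - r)) =
    w ^ k * poly (smult (inverse w ^ r) (q \<circ>\<^sub>p [:- of_nat r, 1:])) (of_nat k)"
  using assms by (simp add: poly_pcompose power_diff field_simps)

lemma linear_recurrence_closed_form:
  fixes Q :: "complex poly"
  assumes "Q \<noteq> 0" and "\<And>k. eval_shift Q f k = 0"
  shows "\<exists>p. (\<forall>w. poly Q w = 0 \<longrightarrow> degree (p w) < order w Q) \<and>
    (\<forall>k \<ge> order 0 Q. f k = (\<Sum>w | poly Q w = 0. w ^ k * poly (p w) (of_nat k)))"
proof -
  define r where "r = order 0 Q"
  obtain Q0 where Q: "Q = [:0, 1:] ^ r * Q0" and "\<not> [:0, 1:] dvd Q0"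
    using order_decomp[OF \<open>Q \<noteq> 0\<close>, of 0] unfolding r_def by auto
  then have Q0_0: "poly Q0 0 \<noteq> 0"
    by (simp add: poly_eq_0_iff_dvd)
  have "eval_shift Q0 (\<lambda>k. f (k + r)) k = 0" for k
    using assms(2)[of k] by (simp add: Q eval_shift_mult eval_shift_shifted_seq
        monom_altdef[of 1, simplified, symmetric] eval_shift_monom_1)
  then obtain p0 where
    degree_p0: "\<And>w. poly Q0 w = 0 \<Longrightarrow> degree (p0 w) < order w Q0" and
    f_shifted: "\<And>k. f (k + r) = (\<Sum>w | poly Q0 w = 0. w ^ k * poly (p0 w) (of_nat k))"
    using exp_poly_solution_if_nonzero_constant_coeff[OF Q0_0]
    unfolding exp_poly_solution_def by blast
  define p where "p w = smult (inverse w ^ r) (p0 w \<circ>\<^sub>p [:- of_nat r, 1:])" for w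
  have r_pos: "0 < r" if "poly Q 0 = 0"
    using that \<open>Q \<noteq> 0\<close> order_root unfolding r_def by blast
  have roots: "{w. poly Q0 w = 0} = {w. poly Q w = 0} - {0}"
    using Q0_0 by (auto simp: Q)
  have "degree (p w) < order w Q" if "poly Q w = 0" for w
  proof (cases "w = 0")
    case True
    then show ?thesis using r_pos that by (simp add: p_def r_def)
  next
    case False
    then have "order w Q = order w Q0"
      using order_mult[OF \<open>Q \<noteq> 0\<close>[unfolded Q], of w] by (simp add: Q order_0I)
    moreover have "degree (p w) \<le> degree (p0 w)"
      by (simp add: p_def degree_pcompose)
    moreover have "poly Q0 w = 0"
      using False that roots by blast
    ultimately show ?thesis
      using degree_p0[of w] by simp
  qed
  moreover have "f k = (\<Sum>w | poly Q w = 0. w ^ k * poly (p w) (of_nat k))" if "r \<le> k" for k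
  proof -
    have "f k = (\<Sum>w | poly Q0 w = 0. w ^ (k - r) * poly (p0 w) (of_nat (k - r)))"
      using f_shifted[of "k - r"] that by simp
    also have "\<dots> = (\<Sum>w | poly Q0 w = 0. w ^ k * poly (p w) (of_nat k))"
      unfolding p_def using Q0_0 that by (intro sum.cong refl exp_times_poly_recenter) auto
    also have "\<dots> = (\<Sum>w | poly Q w = 0. w ^ k * poly (p w) (of_nat k))"
      unfolding roots using that r_pos
      by (intro sum.mono_neutral_left) (auto simp: poly_roots_finite \<open>Q \<noteq> 0\<close>)
    finally show ?thesis .
  qed
  ultimately show ?thesis unfolding r_def by blast
qed

lemma poly_eq_sum_lessThan:
  fixes p :: "'a::comm_semiring_1 poly"
  shows "degree p < N \<Longrightarrow> poly p x = (\<Sum>j<N. coeff p j * x ^ j)"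
  unfolding poly_altdef by (rule sum.mono_neutral_left) (auto simp: coeff_eq_0)

lemma linear_recurrence_closed_form_coeffs:
  fixes Q :: "complex poly"
  assumes "Q \<noteq> 0" and "\<And>k. eval_shift Q f k = 0"
  shows "\<exists>c. \<forall>k \<ge> order 0 Q.
    f k = (\<Sum>z | poly Q z = 0. z ^ k * (\<Sum>j<order z Q. c z j * of_nat k ^ j))"
proof -
  obtain p where degree_p: "\<forall>w. poly Q w = 0 \<longrightarrow> degree (p w) < order w Q"
    and f_eq: "\<forall>k \<ge> order 0 Q. f k = (\<Sum>w | poly Q w = 0. w ^ k * poly (p w) (of_nat k))"
    using linear_recurrence_closed_form[OF assms] by blast
  have poly_p: "poly (p z) x = (\<Sum>j<order z Q. coeff (p z) j * x ^ j)" if "poly Q z = 0" for z x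
    using degree_p that by (intro poly_eq_sum_lessThan) simp
  have "f k = (\<Sum>z | poly Q z = 0. z ^ k * (\<Sum>j<order z Q. coeff (p z) j * of_nat k ^ j))"
    if "order 0 Q \<le> k" for k
    unfolding f_eq[rule_format, OF that] using poly_p by (intro sum.cong) auto
  then show ?thesis
    by (intro exI[of _ "\<lambda>z j. coeff (p z) j"]) blast
qed

lemma norm_exp_poly_le:
  fixes c :: "complex \<Rightarrow> nat \<Rightarrow> complex"
  assumes "\<And>z. z \<in> R \<Longrightarrow> cmod z = 1" and "\<And>z. z \<in> R \<Longrightarrow> M z \<le> N"
    and "x = (\<Sum>z\<in>R. z ^ k * (\<Sum>j<M z. c z j * of_nat k ^ j))"
  shows "cmod x \<le> (\<Sum>z\<in>R. \<Sum>j<M z. cmod (c z j)) * (real k + 1) ^ N"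
proof -
  have "cmod x \<le> (\<Sum>z\<in>R. \<Sum>j<M z. cmod (c z j) * real k ^ j)"
    unfolding assms(3) using assms(1)
    by (auto intro!: order.trans[OF norm_sum] sum_mono simp: norm_mult norm_power)
  also have "\<dots> \<le> (\<Sum>z\<in>R. \<Sum>j<M z. cmod (c z j) * (real k + 1) ^ N)"
  proof (intro sum_mono mult_left_mono)
    fix z j assume "z \<in> R" "j \<in> {..<M z}"
    then have "j \<le> N" using assms(2) by fastforce
    then show "real k ^ j \<le> (real k + 1) ^ N"
      using power_mono[of "real k" "real k + 1" j] power_increasing[of j N "real k + 1"] by simp
  qed simp
  finally show ?thesis by (simp add: sum_distrib_right)
qed

section \<open>The matrix Lambda\<close>

lemma Lambda_carrier: "Lambda n \<sigma>1 \<alpha> \<beta> m i iinv iab \<in> carrier_mat (Suc \<sigma>1) (Suc \<sigma>1)"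
  by (simp add: Lambda_def)

lemma
  fixes a :: "'a::comm_semiring_1"
  shows degree_const_plus_monom: "degree ([:a:] + monom 1 (Suc k)) = Suc k"
    and lead_coeff_const_plus_monom: "lead_coeff ([:a:] + monom 1 (Suc k)) = 1"
proof -
  have "degree [:a:] < degree (monom 1 (Suc k) :: 'a poly)"
    by (simp add: degree_monom_eq)
  then show "degree ([:a:] + monom 1 (Suc k)) = Suc k"
    and "lead_coeff ([:a:] + monom 1 (Suc k)) = 1"
    by (simp_all only: degree_add_eq_right lead_coeff_add_le) (simp_all add: degree_monom_eq)
qed

lemma det_Lambda:
  shows "lead_coeff (det (Lambda n \<sigma>1 \<alpha> \<beta> m i iinv iab)) = 1"
    and "degree (det (Lambda n \<sigma>1 \<alpha> \<beta> m i iinv iab)) = (\<Sum>j<\<sigma>1. m j) + \<sigma>1 + 1"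
proof -
  define L where "L = Lambda n \<sigma>1 \<alpha> \<beta> m i iinv iab"
  have degree_diag: "degree (L $$ (c, c)) = (if c = 0 then 1 else Suc (m (c - 1)))"
    and lead_coeff_diag: "lead_coeff (L $$ (c, c)) = 1" if "c < Suc \<sigma>1" for c
    using that
    by (simp_all add: L_def Lambda_def degree_const_plus_monom lead_coeff_const_plus_monom)
  have off_diag: "degree (L $$ (r, c)) = 0" if "r < Suc \<sigma>1" "c < Suc \<sigma>1" "r \<noteq> c" for r c
    using that by (simp add: L_def Lambda_def)
  have diag_pos: "0 < degree (L $$ (c, c))" if "c < Suc \<sigma>1" for c
    using degree_diag[OF that] by simp
  have "L \<in> carrier_mat (Suc \<sigma>1) (Suc \<sigma>1)"
    unfolding L_def by (rule Lambda_carrier)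
  note det_L = det_const_off_diagonal[OF this off_diag diag_pos]
  have "(\<Sum>c<Suc \<sigma>1. degree (L $$ (c, c))) = (\<Sum>j<\<sigma>1. m j) + \<sigma>1 + 1"
    using degree_diag by (simp add: sum.lessThan_Suc_shift sum_Suc del: sum.lessThan_Suc)
  then show "degree (det L) = (\<Sum>j<\<sigma>1. m j) + \<sigma>1 + 1"
    by (simp add: det_L(1))
  have "lead_coeff (det L) = (\<Prod>c<Suc \<sigma>1. lead_coeff (L $$ (c, c)))"
    by (rule det_L(2))
  also have "\<dots> = 1"
    using lead_coeff_diag by (intro prod.neutral) blast
  finally show "lead_coeff (det L) = 1" .
qed

lemma mat_eval_shift_Lambda:
  fixes d :: "nat \<Rightarrow> int" and \<gamma> :: "nat \<Rightarrow> int \<Rightarrow> int"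
  assumes rec_d: "\<And>k. k \<ge> 1 \<Longrightarrow>
        d k = int n * d (k - 1)
              - (\<Sum>l<\<sigma>1. int (iinv (\<beta> l)) * \<gamma> (\<alpha> l) (int k - int (m l) - 1))"
    and rec_g: "\<And>j k. j < \<sigma>1 \<Longrightarrow> k \<ge> 1 \<Longrightarrow>
        \<gamma> (\<alpha> j) (int k) = int (i (\<alpha> j)) * d (k - 1)
              - (\<Sum>l<\<sigma>1. int (iab (\<alpha> j) (\<beta> l)) * \<gamma> (\<alpha> l) (int k - int (m l) - 1))"
    and U_def: "U = (\<lambda>c k. if c = 0 then d k else \<gamma> (\<alpha> (c - 1)) (int k - int (m (c - 1))))"
    and "r < Suc \<sigma>1"
  shows "mat_eval_shift (Lambda n \<sigma>1 \<alpha> \<beta> m i iinv iab) U r k = 0"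
proof -
  define L where "L = Lambda n \<sigma>1 \<alpha> \<beta> m i iinv iab"
  have "mat_eval_shift L U r k =
      eval_shift (L $$ (r, 0)) d k + (\<Sum>l<\<sigma>1. eval_shift (L $$ (r, Suc l)) (U (Suc l)) k)"
    by (simp add: mat_eval_shift_def L_def Lambda_def sum.lessThan_Suc_shift U_def
        del: sum.lessThan_Suc)
  also have "\<dots> = 0"
  proof (cases r)
    case 0
    have "eval_shift (L $$ (r, 0)) d k = d (Suc k) - int n * d k"
      using 0 by (simp add: L_def Lambda_def eval_shift_pCons)
    moreover have "eval_shift (L $$ (r, Suc l)) (U (Suc l)) k =
        int (iinv (\<beta> l)) * \<gamma> (\<alpha> l) (int k - int (m l))" if "l < \<sigma>1" for l
      using 0 that by (simp add: L_def Lambda_def U_def)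
    ultimately show ?thesis
      using rec_d[of "Suc k"] by simp
  next
    case (Suc j)
    with \<open>r < Suc \<sigma>1\<close> have "j < \<sigma>1" by simp
    have "eval_shift (L $$ (r, 0)) d k = - int (i (\<alpha> j)) * d k"
      using Suc \<open>j < \<sigma>1\<close> by (simp add: L_def Lambda_def)
    moreover have "eval_shift (L $$ (r, Suc l)) (U (Suc l)) k =
        int (iab (\<alpha> j) (\<beta> l)) * \<gamma> (\<alpha> l) (int k - int (m l))
        + (if l = j then \<gamma> (\<alpha> j) (int k + 1) else 0)" if "l < \<sigma>1" for l
      using Suc \<open>j < \<sigma>1\<close> that
      by (simp add: L_def Lambda_def U_def eval_shift_add eval_shift_monom_1 add.commute)
    ultimately show ?thesis
      using rec_g[OF \<open>j < \<sigma>1\<close>, of "Suc k"] \<open>j < \<sigma>1\<close> by (simp add: sum.distrib add.commute)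
  qed
  finally show ?thesis unfolding L_def .
qed

lemma eval_shift_det_Lambda:
  fixes d :: "nat \<Rightarrow> int" and \<gamma> :: "nat \<Rightarrow> int \<Rightarrow> int"
  assumes rec_d: "\<And>k. k \<ge> 1 \<Longrightarrow>
        d k = int n * d (k - 1)
              - (\<Sum>l<\<sigma>1. int (iinv (\<beta> l)) * \<gamma> (\<alpha> l) (int k - int (m l) - 1))"
    and rec_g: "\<And>j k. j < \<sigma>1 \<Longrightarrow> k \<ge> 1 \<Longrightarrow>
        \<gamma> (\<alpha> j) (int k) = int (i (\<alpha> j)) * d (k - 1)
              - (\<Sum>l<\<sigma>1. int (iab (\<alpha> j) (\<beta> l)) * \<gamma> (\<alpha> l) (int k - int (m l) - 1))"
  shows "eval_shift (det (Lambda n \<sigma>1 \<alpha> \<beta> m i iinv iab)) d k = 0"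
proof -
  define U where "U = (\<lambda>c k. if c = 0 then d k else \<gamma> (\<alpha> (c - 1)) (int k - int (m (c - 1))))"
  have "mat_eval_shift (Lambda n \<sigma>1 \<alpha> \<beta> m i iinv iab) U r k = 0" if "r < Suc \<sigma>1" for r k
    using rec_d rec_g U_def that by (rule mat_eval_shift_Lambda)
  then have "eval_shift (det (Lambda n \<sigma>1 \<alpha> \<beta> m i iinv iab)) (U 0) k = 0"
    by (intro eval_shift_det_eq_0[OF Lambda_carrier]) simp_all
  then show ?thesis
    by (simp add: U_def)
qed

theorem theorem1:
  fixes n \<sigma> \<sigma>1 :: nat
    and \<alpha> \<beta> m :: "nat \<Rightarrow> nat"
    and i iinv :: "nat \<Rightarrow> nat" and iab :: "nat \<Rightarrow> nat \<Rightarrow> nat"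
    and d :: "nat \<Rightarrow> int" and \<gamma> :: "nat \<Rightarrow> int \<Rightarrow> int"
  assumes "\<sigma>1 \<le> \<sigma>"
    and "inj_on \<alpha> {..<\<sigma>1}" and "\<alpha> ` {..<\<sigma>1} \<subseteq> {..<\<sigma>}"
    and "inj_on \<beta> {..<\<sigma>1}" and "\<beta> ` {..<\<sigma>1} \<subseteq> {..<\<sigma>}"
    and d0: "d 0 = 1" and d1: "d 1 = int n"
    and g1: "\<And>a. a < \<sigma> \<Longrightarrow> \<gamma> a 1 = int (i a)"
    and g0: "\<And>a k. k \<le> 0 \<Longrightarrow> \<gamma> a k = 0"
    and rec_d: "\<And>k. k \<ge> 1 \<Longrightarrow>
        d k = int n * d (k - 1)
              - (\<Sum>l<\<sigma>1. int (iinv (\<beta> l)) * \<gamma> (\<alpha> l) (int k - int (m l) - 1))"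
    and rec_g: "\<And>j k. j < \<sigma>1 \<Longrightarrow> k \<ge> 1 \<Longrightarrow>
        \<gamma> (\<alpha> j) (int k) = int (i (\<alpha> j)) * d (k - 1)
              - (\<Sum>l<\<sigma>1. int (iab (\<alpha> j) (\<beta> l)) * \<gamma> (\<alpha> l) (int k - int (m l) - 1))"
  shows "let P = det (Lambda n \<sigma>1 \<alpha> \<beta> m i iinv iab);
             deg = (\<Sum>j<\<sigma>1. m j) + \<sigma>1 + 1;
             Pc = map_poly (of_int :: int \<Rightarrow> complex) P;
             R = {z. poly Pc z = 0}
         in lead_coeff P = 1 \<and> degree P = deg
          \<and> (\<forall>k. d (k + deg) + (\<Sum>j<deg. coeff P j * d (k + j)) = 0)
          \<and> (\<exists>c :: complex \<Rightarrow> nat \<Rightarrow> complex. \<forall>k \<ge> order 0 Pc.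
                of_int (d k) = (\<Sum>z\<in>R. z ^ k * (\<Sum>j<order z Pc. c z j * of_nat k ^ j)))
          \<and> ((\<forall>z\<in>R. cmod z = 1) \<longrightarrow>
               (\<exists>C r. \<forall>k. \<bar>real_of_int (d k)\<bar> \<le> C * (real k + 1) ^ r))"
proof -
  define P where "P = det (Lambda n \<sigma>1 \<alpha> \<beta> m i iinv iab)"
  define deg where "deg = (\<Sum>j<\<sigma>1. m j) + \<sigma>1 + 1"
  define Pc where "Pc = map_poly (of_int :: int \<Rightarrow> complex) P"
  define R where "R = {z. poly Pc z = 0}"
  have monic: "lead_coeff P = 1" and degree_P: "degree P = deg"
    unfolding P_def deg_def by (rule det_Lambda)+
  have annihilated: "eval_shift P d k = 0" for k
    unfolding P_def using rec_d rec_g by (rule eval_shift_det_Lambda)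
  then have recurrence: "d (k + deg) + (\<Sum>j<deg. coeff P j * d (k + j)) = 0" for k
    using eval_shift_monic[OF monic] by (simp add: degree_P)
  have degree_Pc: "degree Pc = deg"
    by (simp add: Pc_def degree_P degree_map_poly)
  then have "Pc \<noteq> 0"
    by (auto simp: deg_def)
  have "eval_shift Pc (\<lambda>k. of_int (d k)) k = 0" for k
    by (simp add: Pc_def eval_shift_of_int_poly annihilated)
  from linear_recurrence_closed_form_coeffs[OF \<open>Pc \<noteq> 0\<close> this] obtain c
    where closed_form: "\<forall>k \<ge> order 0 Pc.
      of_int (d k) = (\<Sum>z\<in>R. z ^ k * (\<Sum>j<order z Pc. c z j * of_nat k ^ j))"
    unfolding R_def by blast
  have bounded: "\<exists>C r. \<forall>k. \<bar>real_of_int (d k)\<bar> \<le> C * (real k + 1) ^ r"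
    if unimodular: "\<forall>z\<in>R. cmod z = 1"
  proof -
    have "order 0 Pc = 0"
      using unimodular by (auto simp: R_def intro: order_0I)
    then have "cmod (of_int (d k)) \<le> (\<Sum>z\<in>R. \<Sum>j<order z Pc. cmod (c z j)) * (real k + 1) ^ deg"
      for k
      using unimodular order_degree[OF \<open>Pc \<noteq> 0\<close>] degree_Pc closed_form
      by (intro norm_exp_poly_le) auto
    then show ?thesis
      by (metis norm_of_int)
  qed
  show ?thesis
    unfolding Let_def P_def[symmetric] deg_def[symmetric] Pc_def[symmetric] R_def[symmetric]
    using monic degree_P recurrence closed_form bounded by blast
qed

end
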